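(* For the link two-relaxation-times scheme described in the context, under diffusive scaling ($\lambda=\mu/\Delta x$, $\mu>0$ fixed as $\Delta x\to0$), assuming $\epsilon_{2j}=\Delta x\tilde\epsilon_{2j}$ with $\tilde\epsilon_{2j}$ and $\epsilon_{2j+1}$ fixed as $\Delta x\to0$, and considering a local initialisation $w\in\mathbb{R}^q$ with $w_1=1$ and $w_{2j}=\Delta x\tilde w_{2j}$ with $\tilde w_{2j}$ (and $w_{2j+1}$) fixed as $\Delta x\to0$ for $j\in\{1,\dots,W\}$, the modified equation of the unique initialisation scheme $m_1(\Delta t,x)=(Ew)_1m_1^\circ(x)$ is, for $x\in\mathbb{R}^d$, \begin{align*} \partial_t\phi(0,x)&+\mu\sum_{j=1}^W\big(s\tilde\epsilon_{2j}+(1-s)\tilde w_{2j}\big)\sum_{|\mathfrak n|=1}c_{2j}^{\mathfrak n}\partial_x^{\mathfrak n}\phi(0,x)\\ &-\mu\sum_{j=1}^W\big((2-s)\epsilon_{2j+1}+(s-1)w_{2j+1}\big)\sum_{|\mathfrak n|=2}\frac{c_{2j}^{\mathfrak n}}{\mathfrak n!}\partial_x^{\mathfrak n}\phi(0,x)=O(\Delta x). \end{align*}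
   Context: Let $d\ge1$, $W\in\mathbb{N}^*$, $q=1+2W$. Velocities $c_1=0$, $c_{2j}=-c_{2j+1}\in\mathbb{Z}^d$, $j\in\{1,\dots,W\}$. Moment matrix $M$ with first row $(1,\dots,1)$ and, for each $j$, row $2j$ with entries $1,-1$ in columns $2j,2j+1$, row $2j+1$ with entries $1,1$ in columns $2j,2j+1$, zeros elsewhere. Relaxation matrix $S=\mathrm{diag}(s_1,\dots,s_q)$ with $s_{2j}=s\in(0,2]$ fixed, $s_{2j+1}=2-s$; equilibrium coefficients $\epsilon\in\mathbb{R}^q$, $\epsilon_1=1$; collision matrix $K=I-S(I-\epsilon e_1^T)$. $\Delta t=\Delta x/\lambda=\Delta x^2/\mu$. Shifts $(x_\ell\phi)(x)=\phi(x-\Delta xe_\ell)$, $x^c=\prod x_\ell^{c_\ell}$; transport matrix $T=M\mathrm{diag}(x^{c_1},\dots,x^{c_q})M^{-1}$, evolution matrix $E=TK$. Time shift $(z\phi)(t)=\phi(t+\Delta t)$. Multi-index notation $c^{\mathfrak n}=\prod c_\ell^{\mathfrak n_\ell}$, $\mathfrak n!=\prod\mathfrak n_\ell!$, $\partial_x^{\mathfrak n}=\prod\partial_{x_\ell}^{\mathfrak n_\ell}$. The initialisation is $m(0,x)=w\,m_1^\circ(x)$. The modified equation of the initialisation scheme is obtained by substituting a smooth $\phi$ into $(z\phi)(0,x)=((Ew)_1\phi(0,\cdot))(x)$, Taylor-expanding both sides in $\Delta x$, cancelling the leading term $\phi(0,x)$ and dividing by $\Delta t=\Delta x^2/\mu$.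 *)

theory Defs
  imports "HOL-Analysis.Analysis" "HOL-Library.Landau_Symbols"
begin

definition dirderiv :: "'a::real_normed_vector \<Rightarrow> ('a \<Rightarrow> real) \<Rightarrow> 'a \<Rightarrow> real" where
  "dirderiv v f y = deriv (\<lambda>h. f (y + h *\<^sub>R v)) 0"

definition smooth_fun :: "('a::euclidean_space \<Rightarrow> real) \<Rightarrow> bool" where
  "smooth_fun f \<longleftrightarrow>
     (\<forall>vs. set vs \<subseteq> Basis \<longrightarrow>
        continuous_on UNIV (foldr dirderiv vs f) \<and>
        (\<forall>v\<in>Basis. \<forall>y. (\<lambda>h. foldr dirderiv vs f (y + h *\<^sub>R v)) differentiable (at 0)))"

definition xpartial :: "'d::finite \<Rightarrow> (real^'d \<Rightarrow> real) \<Rightarrow> real^'d \<Rightarrow> real" where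
  "xpartial l f = dirderiv (axis l 1) f"

definition dvars :: "'d::finite list" where
  "dvars = (SOME xs. distinct xs \<and> set xs = UNIV)"

definition mpartial :: "('d::finite \<Rightarrow> nat) \<Rightarrow> (real^'d \<Rightarrow> real) \<Rightarrow> real^'d \<Rightarrow> real" where
  "mpartial n f = foldr (\<lambda>l g. (xpartial l ^^ n l) g) dvars f"

definition mindices :: "nat \<Rightarrow> ('d::finite \<Rightarrow> nat) set" where
  "mindices k = {n. (\<Sum>l\<in>UNIV. n l) = k}"

definition mpow :: "real^'d \<Rightarrow> ('d::finite \<Rightarrow> nat) \<Rightarrow> real" where
  "mpow c n = (\<Prod>l\<in>UNIV. (c $ l) ^ n l)"

definition mfact :: "('d::finite \<Rightarrow> nat) \<Rightarrow> real" where
  "mfact n = (\<Prod>l\<in>UNIV. fact (n l))"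

definition Mmat :: "nat \<Rightarrow> nat \<Rightarrow> nat \<Rightarrow> real" where
  "Mmat W k l =
    (if k \<in> {1..2*W+1} \<and> l \<in> {1..2*W+1} then
       (if k = 1 then 1
        else if even k then (if l = k then 1 else if l = k + 1 then -1 else 0)
        else (if l = k - 1 then 1 else if l = k then 1 else 0))
     else 0)"

definition mmul :: "nat \<Rightarrow> (nat \<Rightarrow> nat \<Rightarrow> real) \<Rightarrow> (nat \<Rightarrow> nat \<Rightarrow> real) \<Rightarrow> nat \<Rightarrow> nat \<Rightarrow> real" where
  "mmul W A B k l = (\<Sum>p=1..2*W+1. A k p * B p l)"

definition Minv :: "nat \<Rightarrow> nat \<Rightarrow> nat \<Rightarrow> real" where
  "Minv W = (THE N. (\<forall>k\<in>{1..2*W+1}. \<forall>l\<in>{1..2*W+1}.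
                       mmul W N (Mmat W) k l = (if k = l then 1 else 0)) \<and>
                    (\<forall>k l. k \<notin> {1..2*W+1} \<or> l \<notin> {1..2*W+1} \<longrightarrow> N k l = 0))"

text \<open>Collision matrix K = I - S (I - eps e_1^T), S = diag(sr).\<close>
definition Kmat :: "nat \<Rightarrow> (nat \<Rightarrow> real) \<Rightarrow> (nat \<Rightarrow> real) \<Rightarrow> nat \<Rightarrow> nat \<Rightarrow> real" where
  "Kmat W sr eps k l =
    (if k \<in> {1..2*W+1} \<and> l \<in> {1..2*W+1} then
       (if k = l then 1 else 0) - sr k * ((if k = l then 1 else 0) - eps k * (if l = 1 then 1 else 0))
     else 0)"

definition shift_op :: "real \<Rightarrow> real^'d \<Rightarrow> (real^'d \<Rightarrow> real) \<Rightarrow> real^'d \<Rightarrow> real" where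
  "shift_op dx v f y = f (y - dx *\<^sub>R v)"

text \<open>Entries of the transport matrix T = M diag(x^{c_1},...,x^{c_q}) M^{-1} (operators).\<close>
definition transport_op :: "nat \<Rightarrow> real \<Rightarrow> (nat \<Rightarrow> real^'d) \<Rightarrow> nat \<Rightarrow> nat \<Rightarrow>
    (real^'d \<Rightarrow> real) \<Rightarrow> real^'d \<Rightarrow> real" where
  "transport_op W dx c k m f y =
     (\<Sum>p=1..2*W+1. Mmat W k p * Minv W p m * shift_op dx (c p) f y)"

text \<open>Entries of the evolution matrix E = T K.\<close>
definition evol_op :: "nat \<Rightarrow> real \<Rightarrow> (nat \<Rightarrow> real^'d) \<Rightarrow> (nat \<Rightarrow> real) \<Rightarrow> (nat \<Rightarrow> real) \<Rightarrow>
    nat \<Rightarrow> nat \<Rightarrow> (real^'d \<Rightarrow> real) \<Rightarrow> real^'d \<Rightarrow> real" where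
  "evol_op W dx c sr eps k l f y =
     (\<Sum>m=1..2*W+1. Kmat W sr eps m l * transport_op W dx c k m f y)"

definition Ew_op :: "nat \<Rightarrow> real \<Rightarrow> (nat \<Rightarrow> real^'d) \<Rightarrow> (nat \<Rightarrow> real) \<Rightarrow> (nat \<Rightarrow> real) \<Rightarrow>
    (nat \<Rightarrow> real) \<Rightarrow> nat \<Rightarrow> (real^'d \<Rightarrow> real) \<Rightarrow> real^'d \<Rightarrow> real" where
  "Ew_op W dx c sr eps w k f y = (\<Sum>l=1..2*W+1. w l * evol_op W dx c sr eps k l f y)"

end

theory Submission
  imports Defs
begin

(* Write u = K w. The first row of E = T K maps f to the sum over p of (M^-1 u)_p f(x - dx c_p),
   and M^-1 is explicit. Under the diffusive scalings the weight at c_1 = 0 is 1 - sum_j B_j and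
   the weights at -c_2j and +c_2j (recall c_2j+1 = -c_2j) are (B_j + dx A_j)/2 and (B_j - dx A_j)/2,
   with A_j = s eps~_2j + (1 - s) w~_2j and B_j = (2 - s) eps_2j+1 + (s - 1) w_2j+1.
   Expanding phi(0, x + h c_2j) to second order in h, the odd part weighted by dx A_j and the even
   part weighted by B_j contribute dx^2 (B_j a2_j - A_j a1_j) + O(dx^3), where a1_j and 2 a2_j are
   the first and second derivatives along c_2j; a first-order expansion in time handles phi(dt, x).
   Dividing by dt = dx^2/mu leaves the stated terms plus O(dx). The derivatives along c_2j become
   the multi-index sums by the chain rule for functions with continuous partial derivatives and
   Schwarz's theorem. *)

section \<open>The first row of the evolution matrix\<close>

lemma sum_split_first_pairs:
  fixes h :: "nat \<Rightarrow> 'a::comm_monoid_add"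
  shows "(\<Sum>p=1..2*W+1. h p) = h 1 + (\<Sum>j=1..W. h (2*j) + h (2*j+1))"
proof (induction W)
  case 0
  then show ?case by simp
next
  case (Suc W)
  have "{1..2*Suc W+1} = insert (Suc (Suc (Suc (2*W)))) (insert (Suc (Suc (2*W))) {1..2*W+1})"
    by auto
  then show ?case using Suc by (simp add: ac_simps)
qed

lemma moment_index_cases:
  fixes k :: nat
  assumes "k \<in> {1..2*W+1}"
  obtains "k = 1" | j where "j \<in> {1..W}" "k = 2*j" | j where "j \<in> {1..W}" "k = 2*j+1"
proof -
  have "k = 1 \<or> (\<exists>j\<in>{1..W}. k = 2*j) \<or> (\<exists>j\<in>{1..W}. k = 2*j+1)"
    using assms by simp presburger
  then show ?thesis using that by blast
qed

lemma double_eq_Suc_double_iff [simp]: "(2*i = Suc (2*j)) = False" "(Suc (2*j) = 2*i) = False"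
  for i j :: nat
  by presburger+

definition Minv_explicit :: "nat \<Rightarrow> nat \<Rightarrow> nat \<Rightarrow> real" where
  "Minv_explicit W p m = (if p \<in> {1..2*W+1} \<and> m \<in> {1..2*W+1} then
     (if p = 1 then (if m = 1 then 1 else if odd m then -1 else 0)
      else if even p then (if m = p \<or> m = p+1 then 1/2 else 0)
      else (if m = p then 1/2 else if m = p - 1 then -1/2 else 0)) else 0)"

lemma Minv_explicit_row_1:
  "(\<Sum>m=1..2*W+1. Minv_explicit W 1 m * u m) = u 1 - (\<Sum>j=1..W. u (2*j+1))"
  unfolding sum_split_first_pairs by (simp add: Minv_explicit_def sum.distrib sum_negf)

lemma Minv_explicit_row_even:
  "j \<in> {1..W} \<Longrightarrow> (\<Sum>m=1..2*W+1. Minv_explicit W (2*j) m * u m) = (u (2*j) + u (2*j+1)) / 2"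
  unfolding sum_split_first_pairs
  by (simp add: Minv_explicit_def sum.distrib if_distrib[of "\<lambda>x. x * _"] sum.delta cong: if_cong)

lemma Minv_explicit_row_odd:
  "j \<in> {1..W} \<Longrightarrow> (\<Sum>m=1..2*W+1. Minv_explicit W (2*j+1) m * u m) = (u (2*j+1) - u (2*j)) / 2"
  unfolding sum_split_first_pairs
  by (simp add: Minv_explicit_def sum.distrib sum_negf if_distrib[of "\<lambda>x. x * _"] sum.delta cong: if_cong)

lemma Minv_explicit_left_inverse:
  assumes "k \<in> {1..2*W+1}" "l \<in> {1..2*W+1}"
  shows "mmul W (Minv_explicit W) (Mmat W) k l = (if k = l then 1 else 0)"
  using assms unfolding mmul_def
  by (elim moment_index_cases;
      simp only: Minv_explicit_row_1 Minv_explicit_row_even Minv_explicit_row_odd;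
      simp add: Mmat_def cong: if_cong)

lemma Mmat_row_1: "(\<Sum>p=1..2*W+1. Mmat W 1 p * u p) = u 1 + (\<Sum>j=1..W. u (2*j) + u (2*j+1))"
  unfolding sum_split_first_pairs by (simp add: Mmat_def)

lemma Mmat_row_even:
  "j \<in> {1..W} \<Longrightarrow> (\<Sum>p=1..2*W+1. Mmat W (2*j) p * u p) = u (2*j) - u (2*j+1)"
  unfolding sum_split_first_pairs
  by (simp add: Mmat_def sum.distrib if_distrib[of "\<lambda>x. x * _"] sum.delta cong: if_cong)

lemma Mmat_row_odd:
  "j \<in> {1..W} \<Longrightarrow> (\<Sum>p=1..2*W+1. Mmat W (2*j+1) p * u p) = u (2*j) + u (2*j+1)"
  unfolding sum_split_first_pairs
  by (simp add: Mmat_def sum.distrib if_distrib[of "\<lambda>x. x * _"] sum.delta cong: if_cong)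

lemma Minv_explicit_right_inverse:
  assumes "k \<in> {1..2*W+1}" "l \<in> {1..2*W+1}"
  shows "mmul W (Mmat W) (Minv_explicit W) k l = (if k = l then 1 else 0)"
  using assms unfolding mmul_def
  by (elim moment_index_cases;
      simp only: Mmat_row_1 Mmat_row_even Mmat_row_odd;
      simp add: Minv_explicit_def sum.distrib sum_distrib_left[symmetric] cong: if_cong)

lemma mmul_assoc: "mmul W (mmul W A B) C = mmul W A (mmul W B C)"
  unfolding mmul_def sum_distrib_left sum_distrib_right
  by (intro ext, subst sum.swap) (simp add: mult.assoc)

lemma Minv_eq_explicit: "Minv W = Minv_explicit W"
  unfolding Minv_def
proof (rule the_equality, goal_cases)
  case 1
  then show ?case using Minv_explicit_left_inverse by (auto simp: Minv_explicit_def)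
next
  case (2 N)
  show ?case
  proof (intro ext)
    fix k l
    show "N k l = Minv_explicit W k l"
    proof (cases "k \<in> {1..2*W+1} \<and> l \<in> {1..2*W+1}")
      case True
      have "N k l = (\<Sum>p=1..2*W+1. N k p * (if p = l then 1 else 0))"
        using True by (simp add: if_distrib[of "\<lambda>x. _ * x"] sum.delta cong: if_cong)
      also have "\<dots> = mmul W N (mmul W (Mmat W) (Minv_explicit W)) k l"
        using True by (auto simp: mmul_def[of W N] Minv_explicit_right_inverse intro!: sum.cong)
      also have "\<dots> = mmul W (mmul W N (Mmat W)) (Minv_explicit W) k l"
        by (simp only: mmul_assoc)
      also have "\<dots> = Minv_explicit W k l"
        using True 2 by (simp add: mmul_def if_distrib[of "\<lambda>x. x * _"] sum.delta cong: if_cong)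
      finally show ?thesis .
    qed (use 2 in \<open>auto simp: Minv_explicit_def\<close>)
  qed
qed

lemma Kmat_mult_vec:
  assumes "m \<in> {1..2*W+1}"
  shows "(\<Sum>l=1..2*W+1. w l * Kmat W sr eps m l) = w m - sr m * (w m - eps m * w 1)"
proof -
  have "(\<Sum>l=1..2*W+1. w l * Kmat W sr eps m l)
      = (\<Sum>l=1..2*W+1. (if l = m then w l * (1 - sr m) else 0) + (if l = 1 then w l * sr m * eps m else 0))"
    using assms by (intro sum.cong) (auto simp: Kmat_def algebra_simps)
  also have "\<dots> = w m * (1 - sr m) + w 1 * sr m * eps m"
    using assms by (simp add: sum.distrib sum.delta' del: sum.cl_ivl_Suc)
  finally show ?thesis by (simp add: algebra_simps)
qed

lemma Ew_op_first_row:
  fixes f :: "real^'d \<Rightarrow> real" and w sr eps :: "nat \<Rightarrow> real"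
  defines "u \<equiv> \<lambda>m. w m - sr m * (w m - eps m * w 1)"
  shows "Ew_op W dx c sr eps w 1 f y =
    f (y - dx *\<^sub>R c 1) * (u 1 - (\<Sum>j=1..W. u (2*j+1))) +
    (\<Sum>j=1..W. f (y - dx *\<^sub>R c (2*j)) * ((u (2*j) + u (2*j+1)) / 2)
              + f (y - dx *\<^sub>R c (2*j+1)) * ((u (2*j+1) - u (2*j)) / 2))"
proof -
  let ?R = "{1..2*W+1}"
  let ?sh = "\<lambda>p. f (y - dx *\<^sub>R c p)"
  have transport: "transport_op W dx c 1 m f y = (\<Sum>p\<in>?R. Minv_explicit W p m * ?sh p)" for m
    unfolding transport_op_def shift_op_def Minv_eq_explicit by (intro sum.cong) (auto simp: Mmat_def)
  have "Ew_op W dx c sr eps w 1 f y = (\<Sum>m\<in>?R. transport_op W dx c 1 m f y * (\<Sum>l\<in>?R. w l * Kmat W sr eps m l))"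
    unfolding Ew_op_def evol_op_def sum_distrib_left sum_distrib_right
    by (subst sum.swap) (simp add: mult_ac)
  also have "\<dots> = (\<Sum>m\<in>?R. (\<Sum>p\<in>?R. Minv_explicit W p m * ?sh p) * u m)"
    unfolding transport u_def by (intro sum.cong refl) (simp only: Kmat_mult_vec)
  also have "\<dots> = (\<Sum>p\<in>?R. ?sh p * (\<Sum>m\<in>?R. Minv_explicit W p m * u m))"
    unfolding sum_distrib_left sum_distrib_right by (subst sum.swap) (simp add: mult_ac)
  also have "\<dots> = ?sh 1 * (u 1 - (\<Sum>j=1..W. u (2*j+1))) +
    (\<Sum>j=1..W. ?sh (2*j) * ((u (2*j) + u (2*j+1)) / 2) + ?sh (2*j+1) * ((u (2*j+1) - u (2*j)) / 2))"
    unfolding sum_split_first_pairs[where h="\<lambda>p. ?sh p * (\<Sum>m\<in>?R. Minv_explicit W p m * u m)"]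
      Minv_explicit_row_1
    by (intro arg_cong2[where f="(+)"] refl sum.cong) (simp_all only: Minv_explicit_row_even Minv_explicit_row_odd)
  finally show ?thesis .
qed

lemma Ew_op_first_row_diffusive:
  fixes F :: "real^'d \<Rightarrow> real" and e w sr :: "nat \<Rightarrow> real"
  assumes "c 1 = 0" and "\<forall>j\<in>{1..W}. c (2*j+1) = - c (2*j)"
    and "\<forall>j\<in>{1..W}. sr (2*j) = s \<and> sr (2*j+1) = 2 - s" and "e 1 = 1" and "w 1 = 1"
  defines "A \<equiv> \<lambda>j. s * e (2*j) + (1 - s) * w (2*j)"
    and "B \<equiv> \<lambda>j. (2 - s) * e (2*j+1) + (s - 1) * w (2*j+1)"
  shows "Ew_op W dx c sr (\<lambda>k. if even k then dx * e k else e k) (\<lambda>k. if even k then dx * w k else w k) 1 F x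
    = F x * (1 - (\<Sum>j=1..W. B j))
      + (\<Sum>j=1..W. F (x - dx *\<^sub>R c (2*j)) * (dx * A j + B j) / 2
                  + F (x + dx *\<^sub>R c (2*j)) * (B j - dx * A j) / 2)"
proof -
  define eps' where "eps' = (\<lambda>k. if even k then dx * e k else e k)"
  define w' where "w' = (\<lambda>k. if even k then dx * w k else w k)"
  define u where "u m = w' m - sr m * (w' m - eps' m * w' 1)" for m
  have row: "Ew_op W dx c sr eps' w' 1 F x =
    F (x - dx *\<^sub>R c 1) * (u 1 - (\<Sum>j=1..W. u (2*j+1))) +
    (\<Sum>j=1..W. F (x - dx *\<^sub>R c (2*j)) * ((u (2*j) + u (2*j+1)) / 2)
              + F (x - dx *\<^sub>R c (2*j+1)) * ((u (2*j+1) - u (2*j)) / 2))"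
    unfolding u_def by (rule Ew_op_first_row)
  \<comment> \<open>Since \<open>e 1 = 1\<close>, the collision leaves the conserved moment unchanged whatever \<open>sr 1\<close> is.\<close>
  have u_1: "u 1 = 1"
    using assms(4,5) by (simp add: u_def eps'_def w'_def)
  have u_even: "u (2*j) = dx * A j" and u_odd: "u (2*j+1) = B j" if "j \<in> {1..W}" for j
  proof -
    have sr: "sr (2*j) = s" "sr (2*j+1) = 2 - s"
      using assms(3) that by auto
    show "u (2*j) = dx * A j" "u (2*j+1) = B j"
      unfolding u_def A_def B_def sr using assms(5) by (simp_all add: eps'_def w'_def algebra_simps)
  qed
  have weights_odd: "(\<Sum>j=1..W. u (2*j+1)) = (\<Sum>j=1..W. B j)"
    using u_odd by (rule sum.cong[OF refl])
  have "(\<Sum>j=1..W. F (x - dx *\<^sub>R c (2*j)) * ((u (2*j) + u (2*j+1)) / 2)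
              + F (x - dx *\<^sub>R c (2*j+1)) * ((u (2*j+1) - u (2*j)) / 2))
      = (\<Sum>j=1..W. F (x - dx *\<^sub>R c (2*j)) * (dx * A j + B j) / 2
                  + F (x + dx *\<^sub>R c (2*j)) * (B j - dx * A j) / 2)"
  proof (rule sum.cong[OF refl])
    fix j assume j: "j \<in> {1..W}"
    have "c (2*j+1) = - c (2*j)"
      using assms(2) j by blast
    then show "F (x - dx *\<^sub>R c (2*j)) * ((u (2*j) + u (2*j+1)) / 2)
              + F (x - dx *\<^sub>R c (2*j+1)) * ((u (2*j+1) - u (2*j)) / 2)
      = F (x - dx *\<^sub>R c (2*j)) * (dx * A j + B j) / 2 + F (x + dx *\<^sub>R c (2*j)) * (B j - dx * A j) / 2"
      unfolding u_even[OF j] u_odd[OF j] by simp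
  qed
  then show ?thesis
    unfolding eps'_def[symmetric] w'_def[symmetric] row u_1 assms(1) weights_odd by simp
qed

section \<open>Partial derivatives and Taylor expansion\<close>

lemma dirderiv_line_has_real_derivative:
  fixes G :: "'a::real_normed_vector \<Rightarrow> real"
  assumes "\<forall>y. (\<lambda>h. G (y + h *\<^sub>R v)) differentiable (at 0)"
  shows "((\<lambda>t. G (z + t *\<^sub>R v)) has_real_derivative dirderiv v G (z + t *\<^sub>R v)) (at t)"
proof -
  let ?y = "z + t *\<^sub>R v"
  have "((\<lambda>h. G (?y + h *\<^sub>R v)) has_real_derivative dirderiv v G ?y) (at (t + - t))"
    using assms unfolding dirderiv_def by (simp add: DERIV_deriv_iff_real_differentiable)
  then have "((\<lambda>s. G (?y + (s + - t) *\<^sub>R v)) has_real_derivative dirderiv v G ?y) (at t)"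
    by (subst (asm) DERIV_shift) simp
  moreover have "(\<lambda>s. G (?y + (s + - t) *\<^sub>R v)) = (\<lambda>s. G (z + s *\<^sub>R v))"
    by (simp add: algebra_simps)
  ultimately show ?thesis by simp
qed

lemma xpartial_axis_increment:
  fixes G :: "real^'d \<Rightarrow> real"
  assumes diff: "\<forall>y. (\<lambda>h. G (y + h *\<^sub>R axis k 1)) differentiable (at 0)"
    and close: "\<And>\<xi>. \<bar>\<xi>\<bar> \<le> \<bar>t\<bar> \<Longrightarrow> \<bar>xpartial k G (z + \<xi> *\<^sub>R axis k 1) - a\<bar> \<le> e"
  shows "\<bar>G (z + t *\<^sub>R axis k 1) - G z - t * a\<bar> \<le> \<bar>t\<bar> * e"
proof -
  define D where "D m s = (if m = 0 then G (z + s *\<^sub>R axis k 1) else xpartial k G (z + s *\<^sub>R axis k 1))"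
    for m :: nat and s
  have "(D 0 has_real_derivative D 1 s) (at s)" for s
    using dirderiv_line_has_real_derivative[OF diff] by (simp add: D_def[abs_def] xpartial_def)
  then obtain \<xi> where \<xi>: "\<bar>\<xi>\<bar> \<le> \<bar>t\<bar>"
    and mvt: "G (z + t *\<^sub>R axis k 1) = G z + xpartial k G (z + \<xi> *\<^sub>R axis k 1) * t"
    using Maclaurin_bi_le[of D "D 0" 1 t] by (auto simp: D_def)
  then have "G (z + t *\<^sub>R axis k 1) - G z - t * a = t * (xpartial k G (z + \<xi> *\<^sub>R axis k 1) - a)"
    by (simp add: algebra_simps)
  then show ?thesis
    using close[OF \<xi>] by (simp add: abs_mult mult_left_mono)
qed

lemma xpartial_linearization_bound:
  fixes G :: "real^'d \<Rightarrow> real" and e :: real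
  assumes diff: "\<forall>l y. (\<lambda>h. G (y + h *\<^sub>R axis l 1)) differentiable (at 0)"
    and close: "\<And>l z. norm (z - y) < d \<Longrightarrow> \<bar>xpartial l G z - xpartial l G y\<bar> \<le> e"
    and "finite S" and "\<forall>l. l \<notin> S \<longrightarrow> v$l = 0" and "norm v < d"
  shows "\<bar>G (y + v) - G y - (\<Sum>l\<in>S. v$l * xpartial l G y)\<bar> \<le> real (card S) * e * norm v"
  using assms(3-5)
proof (induction S arbitrary: v rule: finite_induct)
  case empty
  then have "v = 0" by (simp add: vec_eq_iff)
  then show ?case by simp
next
  case (insert k S)
  have "norm (y - y) < d"
    using le_less_trans[OF norm_ge_zero \<open>norm v < d\<close>] by simp
  from close[OF this] have "e \<ge> 0"
    by simp
  define v' where "v' = v - (v$k) *\<^sub>R axis k 1"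
  have v'_nth: "v'$l = (if l = k then 0 else v$l)" for l
    by (simp add: v'_def axis_def)
  have "norm v' \<le> norm v"
    by (rule norm_le_componentwise_cart) (simp add: v'_nth)
  have "\<bar>G (y + v') - G y - (\<Sum>l\<in>S. v'$l * xpartial l G y)\<bar> \<le> real (card S) * e * norm v'"
    using insert.prems v'_nth \<open>norm v' \<le> norm v\<close> by (intro insert.IH) auto
  moreover have "(\<Sum>l\<in>S. v'$l * xpartial l G y) = (\<Sum>l\<in>S. v$l * xpartial l G y)"
    using insert.hyps(2) v'_nth by (intro sum.cong) auto
  moreover have "real (card S) * e * norm v' \<le> real (card S) * e * norm v"
    using \<open>norm v' \<le> norm v\<close> \<open>e \<ge> 0\<close> by (simp add: mult_left_mono)
  ultimately have IH: "\<bar>G (y + v') - G y - (\<Sum>l\<in>S. v$l * xpartial l G y)\<bar> \<le> real (card S) * e * norm v"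
    by linarith
  have "\<bar>G (y + v' + v$k *\<^sub>R axis k 1) - G (y + v') - v$k * xpartial k G y\<bar> \<le> \<bar>v$k\<bar> * e"
  proof (rule xpartial_axis_increment)
    show "\<forall>z. (\<lambda>h. G (z + h *\<^sub>R axis k 1)) differentiable (at 0)"
      using diff by blast
    fix \<xi> :: real assume "\<bar>\<xi>\<bar> \<le> \<bar>v$k\<bar>"
    then have "norm (y + v' + \<xi> *\<^sub>R axis k 1 - y) \<le> norm v"
      by (intro norm_le_componentwise_cart) (auto simp: v'_nth axis_def)
    then show "\<bar>xpartial k G (y + v' + \<xi> *\<^sub>R axis k 1) - xpartial k G y\<bar> \<le> e"
      using close insert.prems(2) by fastforce
  qed
  also have "\<dots> \<le> norm v * e"
    using component_le_norm_cart[of v k] \<open>e \<ge> 0\<close> by (rule mult_right_mono)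
  finally have step: "\<bar>G (y + v) - G (y + v') - v$k * xpartial k G y\<bar> \<le> norm v * e"
    by (simp add: v'_def)
  have "\<bar>G (y + v) - G y - (\<Sum>l\<in>insert k S. v$l * xpartial l G y)\<bar>
      \<le> \<bar>G (y + v) - G (y + v') - v$k * xpartial k G y\<bar> + \<bar>G (y + v') - G y - (\<Sum>l\<in>S. v$l * xpartial l G y)\<bar>"
    using insert.hyps by simp
  also have "\<dots> \<le> real (card (insert k S)) * e * norm v"
    using step IH insert.hyps by (simp add: algebra_simps)
  finally show ?case .
qed

lemma has_derivative_of_continuous_xpartials:
  fixes G :: "real^'d \<Rightarrow> real"
  assumes diff: "\<forall>l y. (\<lambda>h. G (y + h *\<^sub>R axis l 1)) differentiable (at 0)"
    and cont: "\<forall>l. continuous_on UNIV (xpartial l G)"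
  shows "(G has_derivative (\<lambda>v. \<Sum>l\<in>UNIV. v$l * xpartial l G y)) (at y)"
  unfolding has_derivative_at_alt
proof (intro conjI allI impI)
  show "bounded_linear (\<lambda>v. \<Sum>l\<in>UNIV. v$l * xpartial l G y)"
    by (auto intro!: bounded_linear_intros)
  fix e :: real assume "e > 0"
  let ?e = "e / CARD('d)"
  have "eventually (\<lambda>z. dist (xpartial l G z) (xpartial l G y) < ?e) (nhds y)" for l
    using cont \<open>e > 0\<close> unfolding continuous_on_iff eventually_nhds_metric by simp
  then have "eventually (\<lambda>z. \<forall>l. dist (xpartial l G z) (xpartial l G y) < ?e) (nhds y)"
    by (rule eventually_all_finite)
  then obtain d where "d > 0" and d: "\<And>z l. dist z y < d \<Longrightarrow> \<bar>xpartial l G z - xpartial l G y\<bar> \<le> ?e"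
    unfolding eventually_nhds_metric dist_real_def by (meson less_imp_le)
  show "\<exists>d>0. \<forall>y'. norm (y' - y) < d \<longrightarrow>
      norm (G y' - G y - (\<Sum>l\<in>UNIV. (y' - y)$l * xpartial l G y)) \<le> e * norm (y' - y)"
  proof (intro exI[of _ d] conjI allI impI \<open>d > 0\<close>)
    fix y' assume "norm (y' - y) < d"
    then have "\<bar>G (y + (y' - y)) - G y - (\<Sum>l\<in>UNIV. (y' - y)$l * xpartial l G y)\<bar> \<le> CARD('d) * ?e * norm (y' - y)"
      using d by (intro xpartial_linearization_bound[OF diff, of y d _ UNIV]) (auto simp: dist_norm)
    then show "norm (G y' - G y - (\<Sum>l\<in>UNIV. (y' - y)$l * xpartial l G y)) \<le> e * norm (y' - y)"
      by simp
  qed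
qed

lemma line_has_real_derivative_of_continuous_xpartials:
  fixes G :: "real^'d \<Rightarrow> real"
  assumes "\<forall>l y. (\<lambda>h. G (y + h *\<^sub>R axis l 1)) differentiable (at 0)"
    and "\<forall>l. continuous_on UNIV (xpartial l G)"
  shows "((\<lambda>t. G (z + t *\<^sub>R c)) has_real_derivative (\<Sum>l\<in>UNIV. c$l * xpartial l G (z + t *\<^sub>R c))) (at t)"
proof -
  have "((\<lambda>t. z + t *\<^sub>R c) has_derivative (\<lambda>h. h *\<^sub>R c)) (at t)"
    by (auto intro!: derivative_eq_intros)
  from has_derivative_compose[OF this has_derivative_of_continuous_xpartials[OF assms]]
  have "((\<lambda>t. G (z + t *\<^sub>R c)) has_derivative (\<lambda>h. \<Sum>l\<in>UNIV. (h *\<^sub>R c)$l * xpartial l G (z + t *\<^sub>R c))) (at t)"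
    by (simp add: o_def)
  moreover have "(\<lambda>h. \<Sum>l\<in>UNIV. (h *\<^sub>R c)$l * xpartial l G (z + t *\<^sub>R c)) = (*) (\<Sum>l\<in>UNIV. c$l * xpartial l G (z + t *\<^sub>R c))"
    by (rule ext) (simp add: sum_distrib_left mult_ac)
  ultimately show ?thesis
    unfolding has_field_derivative_def by simp
qed

lemma second_difference_eq_mixed_xpartial:
  fixes G :: "real^'d \<Rightarrow> real"
  assumes dG: "\<forall>l y. (\<lambda>h. G (y + h *\<^sub>R axis l 1)) differentiable (at 0)"
    and dP: "\<forall>l m y. (\<lambda>h. xpartial l G (y + h *\<^sub>R axis m 1)) differentiable (at 0)"
    and "h > 0"
  shows "\<exists>p. norm (p - z) \<le> 2*h \<and>
    G (z + h *\<^sub>R axis a 1 + h *\<^sub>R axis b 1) - G (z + h *\<^sub>R axis a 1) - G (z + h *\<^sub>R axis b 1) + G z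
      = h * h * xpartial b (xpartial a G) p"
proof -
  define ea :: "real^'d" where "ea = axis a 1"
  define eb :: "real^'d" where "eb = axis b 1"
  define \<phi> where "\<phi> t = G (z + h *\<^sub>R eb + t *\<^sub>R ea) - G (z + t *\<^sub>R ea)" for t
  have "(\<phi> has_real_derivative (xpartial a G (z + h *\<^sub>R eb + t *\<^sub>R ea) - xpartial a G (z + t *\<^sub>R ea))) (at t)" for t
    unfolding \<phi>_def xpartial_def ea_def using dirderiv_line_has_real_derivative[of G "axis a 1"] dG
    by (intro DERIV_diff) blast+
  then obtain t where t: "0 < t" "t < h"
    "\<phi> h - \<phi> 0 = h * (xpartial a G (z + h *\<^sub>R eb + t *\<^sub>R ea) - xpartial a G (z + t *\<^sub>R ea))"
    using MVT2[of 0 h \<phi>] \<open>h > 0\<close> by fastforce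
  define \<psi> where "\<psi> s = xpartial a G (z + t *\<^sub>R ea + s *\<^sub>R eb)" for s
  have "(\<psi> has_real_derivative xpartial b (xpartial a G) (z + t *\<^sub>R ea + s *\<^sub>R eb)) (at s)" for s
    using dirderiv_line_has_real_derivative[of "xpartial a G" "axis b 1" "z + t *\<^sub>R ea" s] dP
    unfolding \<psi>_def eb_def by (simp add: xpartial_def[of b])
  then obtain s where s: "0 < s" "s < h"
    "\<psi> h - \<psi> 0 = h * xpartial b (xpartial a G) (z + t *\<^sub>R ea + s *\<^sub>R eb)"
    using MVT2[of 0 h \<psi>] \<open>h > 0\<close> by fastforce
  have "norm ((z + t *\<^sub>R ea + s *\<^sub>R eb) - z) \<le> norm (t *\<^sub>R ea) + norm (s *\<^sub>R eb)"
    using norm_triangle_ineq[of "t *\<^sub>R ea" "s *\<^sub>R eb"] by simp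
  also have "\<dots> \<le> 2 * h"
    using t s by (simp add: ea_def eb_def)
  finally have close: "norm ((z + t *\<^sub>R ea + s *\<^sub>R eb) - z) \<le> 2 * h" .
  have "G (z + h *\<^sub>R ea + h *\<^sub>R eb) - G (z + h *\<^sub>R ea) - G (z + h *\<^sub>R eb) + G z = \<phi> h - \<phi> 0"
    unfolding \<phi>_def by (simp add: ac_simps)
  also have "\<dots> = h * (\<psi> h - \<psi> 0)"
    using t(3) unfolding \<psi>_def by (simp add: ac_simps)
  also have "\<dots> = h * h * xpartial b (xpartial a G) (z + t *\<^sub>R ea + s *\<^sub>R eb)"
    using s(3) by simp
  finally show ?thesis
    using close unfolding ea_def eb_def by blast
qed

lemma xpartial_commute:
  fixes G :: "real^'d \<Rightarrow> real"
  assumes dG: "\<forall>l y. (\<lambda>h. G (y + h *\<^sub>R axis l 1)) differentiable (at 0)"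
    and dP: "\<forall>l m y. (\<lambda>h. xpartial l G (y + h *\<^sub>R axis m 1)) differentiable (at 0)"
    and cont: "\<forall>l m. continuous_on UNIV (xpartial m (xpartial l G))"
  shows "xpartial l (xpartial m G) z = xpartial m (xpartial l G) z"
proof (rule ccontr)
  let ?A = "xpartial l (xpartial m G)" and ?B = "xpartial m (xpartial l G)"
  assume "?A z \<noteq> ?B z"
  define \<epsilon> where "\<epsilon> = \<bar>?A z - ?B z\<bar> / 2"
  have "\<epsilon> > 0"
    using \<open>?A z \<noteq> ?B z\<close> by (simp add: \<epsilon>_def)
  obtain d where "d > 0" and d: "\<And>p. dist p z < d \<Longrightarrow> \<bar>?A p - ?A z\<bar> < \<epsilon> \<and> \<bar>?B p - ?B z\<bar> < \<epsilon>"
  proof -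
    have "eventually (\<lambda>p. dist (?A p) (?A z) < \<epsilon>) (nhds z)" "eventually (\<lambda>p. dist (?B p) (?B z) < \<epsilon>) (nhds z)"
      using cont \<open>\<epsilon> > 0\<close> unfolding continuous_on_iff eventually_nhds_metric by simp_all
    from eventually_conj[OF this] show ?thesis
      using that unfolding eventually_nhds_metric dist_real_def by blast
  qed
  define h where "h = d / 4"
  have "h > 0"
    using \<open>d > 0\<close> by (simp add: h_def)
  obtain p where p: "norm (p - z) \<le> 2*h"
    "G (z + h *\<^sub>R axis l 1 + h *\<^sub>R axis m 1) - G (z + h *\<^sub>R axis l 1) - G (z + h *\<^sub>R axis m 1) + G z = h * h * ?B p"
    using second_difference_eq_mixed_xpartial[OF dG dP \<open>h > 0\<close>] by blast
  obtain q where q: "norm (q - z) \<le> 2*h"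
    "G (z + h *\<^sub>R axis m 1 + h *\<^sub>R axis l 1) - G (z + h *\<^sub>R axis m 1) - G (z + h *\<^sub>R axis l 1) + G z = h * h * ?A q"
    using second_difference_eq_mixed_xpartial[OF dG dP \<open>h > 0\<close>] by blast
  have "G (z + h *\<^sub>R axis l 1 + h *\<^sub>R axis m 1) = G (z + h *\<^sub>R axis m 1 + h *\<^sub>R axis l 1)"
    by (simp add: ac_simps)
  then have "h * h * ?B p = h * h * ?A q"
    using p(2) q(2) by linarith
  then have "?B p = ?A q"
    using \<open>h > 0\<close> by simp
  have "dist p z < d" "dist q z < d"
    using p(1) q(1) \<open>d > 0\<close> by (simp_all add: dist_norm h_def)
  then have "\<bar>?A q - ?A z\<bar> < \<epsilon>" "\<bar>?B p - ?B z\<bar> < \<epsilon>"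
    using d by blast+
  then show False
    using \<open>?B p = ?A q\<close> unfolding \<epsilon>_def by (auto simp: abs_if split: if_split_asm)
qed

lemma taylor_remainder_bound:
  fixes D :: "nat \<Rightarrow> real \<Rightarrow> real"
  assumes deriv: "\<And>m t. m < n \<Longrightarrow> (D m has_real_derivative D (Suc m) t) (at t)"
    and cont: "continuous_on {-1..1} (D n)"
  shows "\<exists>M. \<forall>h. \<bar>h\<bar> \<le> 1 \<longrightarrow> \<bar>D 0 h - (\<Sum>m<n. D m 0 / fact m * h^m)\<bar> \<le> M * \<bar>h\<bar>^n"
proof -
  obtain B where B: "\<forall>t\<in>{-1..1}. \<bar>D n t\<bar> \<le> B"
    using compact_imp_bounded[OF compact_continuous_image[OF cont compact_Icc]]
    unfolding bounded_iff by auto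
  have "\<bar>D 0 h - (\<Sum>m<n. D m 0 / fact m * h^m)\<bar> \<le> B / fact n * \<bar>h\<bar>^n" if "\<bar>h\<bar> \<le> 1" for h
  proof -
    obtain t where t: "\<bar>t\<bar> \<le> \<bar>h\<bar>"
      and taylor: "D 0 h = (\<Sum>m<n. D m 0 / fact m * h^m) + D n t / fact n * h^n"
      using Maclaurin_bi_le[of D "D 0" n h] deriv by blast
    have "\<bar>D 0 h - (\<Sum>m<n. D m 0 / fact m * h^m)\<bar> = \<bar>D n t\<bar> / fact n * \<bar>h\<bar>^n"
      using taylor by (simp add: abs_mult power_abs)
    also have "\<dots> \<le> B / fact n * \<bar>h\<bar>^n"
    proof -
      have "t \<in> {-1..1}"
        using t that by auto
      then show ?thesis
        using B by (intro mult_right_mono divide_right_mono) auto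
    qed
    finally show ?thesis .
  qed
  then show ?thesis
    by blast
qed

section \<open>Smooth functions\<close>

lemma foldr_dirderiv_slice:
  fixes \<phi> :: "real \<times> 'a::real_normed_vector \<Rightarrow> real"
  shows "foldr dirderiv vs (\<lambda>y. \<phi> (t, y)) y = foldr dirderiv (map (Pair 0) vs) \<phi> (t, y)"
proof (induction vs arbitrary: y)
  case (Cons v vs)
  then show ?case
    by (simp add: dirderiv_def)
qed simp

lemma smooth_fun_slice:
  fixes \<phi> :: "real \<times> 'a::euclidean_space \<Rightarrow> real"
  assumes "smooth_fun \<phi>"
  shows "smooth_fun (\<lambda>y. \<phi> (t, y))"
  unfolding smooth_fun_def
proof (intro allI impI conjI ballI)
  fix vs :: "'a list" assume "set vs \<subseteq> Basis"
  then have vs: "set (map (Pair 0) vs) \<subseteq> Basis"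
    by (auto simp: Basis_prod_def)
  have "continuous_on UNIV (foldr dirderiv (map (Pair 0) vs) \<phi>)"
    using assms vs unfolding smooth_fun_def by blast
  then have "continuous_on UNIV (\<lambda>y. foldr dirderiv (map (Pair 0) vs) \<phi> (t, y))"
    by (rule continuous_on_compose2) (auto intro: continuous_intros)
  then show "continuous_on UNIV (foldr dirderiv vs (\<lambda>y. \<phi> (t, y)))"
    by (simp add: foldr_dirderiv_slice[abs_def])
  fix v :: 'a and y assume "v \<in> Basis"
  then have "(0, v) \<in> (Basis :: (real \<times> 'a) set)"
    by (auto simp: Basis_prod_def)
  then have "(\<lambda>h. foldr dirderiv (map (Pair 0) vs) \<phi> ((t, y) + h *\<^sub>R (0, v))) differentiable (at 0)"
    using assms vs unfolding smooth_fun_def by blast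
  then show "(\<lambda>h. foldr dirderiv vs (\<lambda>y. \<phi> (t, y)) (y + h *\<^sub>R v)) differentiable (at 0)"
    by (simp add: foldr_dirderiv_slice)
qed

lemma foldr_xpartial_eq_dirderiv: "foldr xpartial vs G = foldr dirderiv (map (\<lambda>l. axis l 1) vs) G"
  by (induction vs) (simp_all add: xpartial_def)

lemma smooth_fun_xpartials:
  fixes G :: "real^'d \<Rightarrow> real"
  assumes "smooth_fun G"
  shows "continuous_on UNIV (foldr xpartial vs G)"
    and "(\<lambda>h. foldr xpartial vs G (y + h *\<^sub>R axis l 1)) differentiable (at 0)"
proof -
  have "set (map (\<lambda>l. axis l 1) vs) \<subseteq> (Basis :: (real^'d) set)" "axis l 1 \<in> (Basis :: (real^'d) set)"
    by auto
  then show "continuous_on UNIV (foldr xpartial vs G)"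
    and "(\<lambda>h. foldr xpartial vs G (y + h *\<^sub>R axis l 1)) differentiable (at 0)"
    using assms unfolding smooth_fun_def foldr_xpartial_eq_dirderiv by blast+
qed

lemma smooth_fun_xpartial_commute:
  fixes G :: "real^'d \<Rightarrow> real"
  assumes "smooth_fun G"
  shows "xpartial l (xpartial m G) = xpartial m (xpartial l G)"
proof (rule ext, rule xpartial_commute)
  show "\<forall>l y. (\<lambda>h. G (y + h *\<^sub>R axis l 1)) differentiable (at 0)"
    using smooth_fun_xpartials(2)[OF assms, of "[]"] by simp
  show "\<forall>l m y. (\<lambda>h. xpartial l G (y + h *\<^sub>R axis m 1)) differentiable (at 0)"
    using smooth_fun_xpartials(2)[OF assms, of "[_]"] by simp
  show "\<forall>l m. continuous_on UNIV (xpartial m (xpartial l G))"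
    using smooth_fun_xpartials(1)[OF assms, of "[_, _]"] by simp
qed

lemma smooth_fun_time_taylor:
  fixes \<phi> :: "real \<times> 'a::euclidean_space \<Rightarrow> real"
  assumes "smooth_fun \<phi>"
  shows "\<exists>M. \<forall>t. \<bar>t\<bar> \<le> 1 \<longrightarrow> \<bar>\<phi> (t, x) - \<phi> (0, x) - dirderiv (1, 0) \<phi> (0, x) * t\<bar> \<le> M * \<bar>t\<bar>^2"
proof -
  define D where "D = (\<lambda>m t. foldr dirderiv (replicate m (1, 0)) \<phi> (t, x))"
  have time_basis: "(1, 0) \<in> (Basis :: (real \<times> 'a) set)" "set (replicate m (1, 0)) \<subseteq> (Basis :: (real \<times> 'a) set)" for m
    by (auto simp: Basis_prod_def)
  have "\<forall>y. (\<lambda>h. foldr dirderiv (replicate m (1, 0)) \<phi> (y + h *\<^sub>R (1, 0))) differentiable (at 0)" for m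
    using assms time_basis unfolding smooth_fun_def by blast
  from dirderiv_line_has_real_derivative[OF this, of _ "(0, x)"]
  have "(D m has_real_derivative D (Suc m) t) (at t)" for m t
    unfolding D_def by simp
  moreover have "continuous_on UNIV (foldr dirderiv (replicate 2 (1, 0)) \<phi>)"
    using assms time_basis unfolding smooth_fun_def by blast
  then have "continuous_on {-1..1} (D 2)"
    unfolding D_def by (rule continuous_on_compose2) (auto intro: continuous_intros)
  ultimately show ?thesis
    using taylor_remainder_bound[of 2 D] by (simp add: D_def numeral_2_eq_2 diff_diff_eq)
qed

section \<open>Multi-indices of order one and two\<close>

definition mindex_unit :: "'d \<Rightarrow> 'd \<Rightarrow> nat" where
  "mindex_unit l = (\<lambda>i. if i = l then 1 else 0)"

definition mindex_pair :: "'d \<Rightarrow> 'd \<Rightarrow> 'd \<Rightarrow> nat" where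
  "mindex_pair l m = (\<lambda>i. mindex_unit l i + mindex_unit m i)"

lemma dvars_distinct_UNIV: "distinct (dvars :: 'd::finite list)" "set (dvars :: 'd list) = UNIV"
proof -
  have "\<exists>xs :: 'd list. distinct xs \<and> set xs = UNIV"
    using finite_distinct_list[of "UNIV :: 'd set"] by auto
  then have "distinct (dvars :: 'd list) \<and> set (dvars :: 'd list) = UNIV"
    unfolding dvars_def by (rule someI_ex)
  then show "distinct (dvars :: 'd::finite list)" "set (dvars :: 'd list) = UNIV"
    by auto
qed

lemma foldr_xpartial_pow_unit:
  "distinct xs \<Longrightarrow> foldr (\<lambda>i. xpartial i ^^ mindex_unit l i) xs F = (if l \<in> set xs then xpartial l F else F)"
  by (induction xs) (auto simp: mindex_unit_def)

lemma foldr_xpartial_pow_pair: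
  assumes "distinct xs" and "xpartial l (xpartial m F) = xpartial m (xpartial l F)"
  shows "foldr (\<lambda>i. xpartial i ^^ mindex_pair l m i) xs F
    = (if l \<in> set xs then xpartial l else id) ((if m \<in> set xs then xpartial m else id) F)"
  using assms by (induction xs) (auto simp: mindex_pair_def mindex_unit_def numeral_2_eq_2)

lemma mpartial_unit: "mpartial (mindex_unit l) F = xpartial l F"
  unfolding mpartial_def foldr_xpartial_pow_unit[OF dvars_distinct_UNIV(1)] dvars_distinct_UNIV(2) by simp

lemma mpartial_pair:
  "xpartial l (xpartial m F) = xpartial m (xpartial l F) \<Longrightarrow> mpartial (mindex_pair l m) F = xpartial l (xpartial m F)"
  unfolding mpartial_def by (simp add: foldr_xpartial_pow_pair[OF dvars_distinct_UNIV(1)] dvars_distinct_UNIV(2))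

lemma inj_mindex_unit: "inj mindex_unit"
  by (rule injI) (metis mindex_unit_def one_neq_zero)

lemma mindices_1_eq: "mindices 1 = range (mindex_unit :: 'd::finite \<Rightarrow> _)"
proof (intro set_eqI iffI)
  fix n :: "'d \<Rightarrow> nat" assume "n \<in> mindices 1"
  then have sum_n: "(\<Sum>i\<in>UNIV. n i) = 1"
    by (simp add: mindices_def)
  then obtain l where "n l \<noteq> 0"
    by (metis sum.neutral zero_neq_one)
  moreover have "(\<Sum>i\<in>UNIV. n i) = n l + (\<Sum>i\<in>UNIV - {l}. n i)"
    by (simp add: sum.remove)
  ultimately have "n l = 1" "(\<Sum>i\<in>UNIV - {l}. n i) = 0"
    using sum_n by linarith+
  then have "n = mindex_unit l"
    by (auto simp: mindex_unit_def)
  then show "n \<in> range mindex_unit"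
    by simp
qed (auto simp: mindices_def mindex_unit_def)

lemma mindices_2_eq: "mindices 2 = (\<lambda>(l, m). mindex_pair l m) ` (UNIV :: ('d::finite \<times> 'd) set)"
proof (intro set_eqI iffI)
  fix n :: "'d \<Rightarrow> nat" assume "n \<in> mindices 2"
  then have sum_n: "(\<Sum>i\<in>UNIV. n i) = 2"
    by (simp add: mindices_def)
  then obtain l where "n l \<noteq> 0"
    by (metis sum.neutral zero_neq_numeral)
  moreover have split_l: "(\<Sum>i\<in>UNIV. n i) = n l + (\<Sum>i\<in>UNIV - {l}. n i)"
    by (simp add: sum.remove)
  ultimately consider "n l = 2" | "n l = 1"
    using sum_n by linarith
  then show "n \<in> (\<lambda>(l, m). mindex_pair l m) ` UNIV"
  proof cases
    case 1
    then have "(\<Sum>i\<in>UNIV - {l}. n i) = 0"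
      using sum_n split_l by linarith
    then have "n = mindex_pair l l"
      using 1 by (auto simp: mindex_pair_def mindex_unit_def)
    then show ?thesis
      by auto
  next
    case 2
    then have rest: "(\<Sum>i\<in>UNIV - {l}. n i) = 1"
      using sum_n split_l by linarith
    then obtain m where m: "m \<in> UNIV - {l}" "n m \<noteq> 0"
      by (metis sum.neutral zero_neq_one)
    moreover have "(\<Sum>i\<in>UNIV - {l}. n i) = n m + (\<Sum>i\<in>UNIV - {l} - {m}. n i)"
      using m by (simp add: sum.remove)
    ultimately have "n m = 1" "(\<Sum>i\<in>UNIV - {l} - {m}. n i) = 0"
      using rest by linarith+
    then have "n = mindex_pair l m"
      using 2 m by (auto simp: mindex_pair_def mindex_unit_def)
    then show ?thesis
      by auto
  qed
qed (auto simp: mindices_def mindex_pair_def mindex_unit_def sum.distrib)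

lemma mindex_pair_eq_iff: "mindex_pair l m = mindex_pair a b \<longleftrightarrow> (l = a \<and> m = b) \<or> (l = b \<and> m = a)"
proof
  assume "mindex_pair l m = mindex_pair a b"
  then have "mindex_pair l m l = mindex_pair a b l" "mindex_pair l m m = mindex_pair a b m"
    "mindex_pair l m a = mindex_pair a b a"
    by simp_all
  then show "(l = a \<and> m = b) \<or> (l = b \<and> m = a)"
    unfolding mindex_pair_def mindex_unit_def
    by (cases "l = a"; cases "l = b"; cases "m = a"; cases "m = b"; cases "l = m"; cases "a = b"; simp)
qed (auto simp: mindex_pair_def)

lemma mindex_pair_commute: "mindex_pair l m = mindex_pair m l"
  by (auto simp: mindex_pair_def)

lemma mpow_unit: "mpow c (mindex_unit l) = c$l"
  unfolding mpow_def mindex_unit_def by (simp add: if_distrib[of "\<lambda>k. _ ^ k"] prod.delta cong: if_cong)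

lemma mpow_pair: "mpow c (mindex_pair l m) = c$l * c$m"
proof -
  have "mpow c (mindex_pair l m) = mpow c (mindex_unit l) * mpow c (mindex_unit m)"
    unfolding mpow_def mindex_pair_def by (simp add: power_add prod.distrib)
  then show ?thesis
    by (simp add: mpow_unit)
qed

lemma mfact_pair: "mfact (mindex_pair l m) = (if l = m then 2 else 1)"
proof (cases "l = m")
  case True
  then have "(\<Prod>i\<in>UNIV. fact (mindex_pair l m i) :: real) = (\<Prod>i\<in>UNIV. if i = l then 2 else 1)"
    by (intro prod.cong) (auto simp: mindex_pair_def mindex_unit_def)
  then show ?thesis
    by (simp add: mfact_def prod.delta True)
next
  case False
  then have "fact (mindex_pair l m i) = (1::real)" for i
    by (auto simp: mindex_pair_def mindex_unit_def)
  then show ?thesis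
    by (simp add: mfact_def False)
qed

lemma sum_mindices_1: "(\<Sum>n\<in>mindices 1. mpow c n * mpartial n F y) = (\<Sum>l\<in>UNIV. c$l * xpartial l F y)"
  unfolding mindices_1_eq by (simp add: sum.reindex[OF inj_mindex_unit] mpow_unit mpartial_unit)

lemma sum_mindices_2:
  fixes F :: "real^'d \<Rightarrow> real"
  assumes commute: "\<And>l m. xpartial l (xpartial m F) = xpartial m (xpartial l F)"
  shows "(\<Sum>n\<in>mindices 2. mpow c n / mfact n * mpartial n F y)
    = (\<Sum>l\<in>UNIV. \<Sum>m\<in>UNIV. c$l * c$m * xpartial l (xpartial m F) y) / 2"
proof -
  let ?pair = "\<lambda>(l, m). mindex_pair l (m :: 'd)"
  let ?g = "\<lambda>n. mpow c n * mpartial n F y"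
  have "(\<Sum>l\<in>UNIV. \<Sum>m\<in>UNIV. c$l * c$m * xpartial l (xpartial m F) y) = (\<Sum>p\<in>UNIV. ?g (?pair p))"
    unfolding sum.cartesian_product UNIV_Times_UNIV
    by (intro sum.cong) (auto simp: mpow_pair mpartial_pair[OF commute])
  also have "\<dots> = (\<Sum>n\<in>?pair ` UNIV. \<Sum>p\<in>{p\<in>UNIV. ?pair p = n}. ?g (?pair p))"
    by (rule sum.image_gen) simp
  \<comment> \<open>The fibre over \<open>n\<close> is \<open>{(l, m), (m, l)}\<close>; it is a singleton exactly when \<open>mfact n = 2\<close>.\<close>
  also have "\<dots> = (\<Sum>n\<in>?pair ` UNIV. 2 * (mpow c n / mfact n * mpartial n F y))"
  proof (rule sum.cong[OF refl])
    fix n assume "n \<in> ?pair ` UNIV"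
    then obtain a b where n: "n = mindex_pair a b"
      by auto
    then have "{p\<in>UNIV. ?pair p = n} = {(a, b), (b, a)}"
      using mindex_pair_eq_iff by fastforce
    then show "(\<Sum>p\<in>{p\<in>UNIV. ?pair p = n}. ?g (?pair p)) = 2 * (mpow c n / mfact n * mpartial n F y)"
      by (cases "a = b") (simp_all add: n mfact_pair mindex_pair_commute[of b a])
  qed
  also have "\<dots> = 2 * (\<Sum>n\<in>mindices 2. mpow c n / mfact n * mpartial n F y)"
    by (simp add: mindices_2_eq sum_distrib_left)
  finally show ?thesis
    by simp
qed

lemma smooth_fun_line_taylor:
  fixes G :: "real^'d \<Rightarrow> real"
  assumes "smooth_fun G"
  shows "\<exists>M. \<forall>h. \<bar>h\<bar> \<le> 1 \<longrightarrow> \<bar>G (x + h *\<^sub>R c) - G x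
      - (\<Sum>n\<in>mindices 1. mpow c n * mpartial n G x) * h
      - (\<Sum>n\<in>mindices 2. mpow c n / mfact n * mpartial n G x) * h^2\<bar> \<le> M * \<bar>h\<bar>^3"
proof -
  define P where "P vs = foldr xpartial vs G" for vs
  have line: "((\<lambda>t. P vs (z + t *\<^sub>R c)) has_real_derivative (\<Sum>l\<in>UNIV. c$l * P (l # vs) (z + t *\<^sub>R c))) (at t)"
    for vs z t
  proof -
    have "\<forall>l y. (\<lambda>h. P vs (y + h *\<^sub>R axis l 1)) differentiable (at 0)"
      "\<forall>l. continuous_on UNIV (xpartial l (P vs))"
      using smooth_fun_xpartials[OF assms, of "_ # vs"] smooth_fun_xpartials(2)[OF assms] by (simp_all add: P_def)
    from line_has_real_derivative_of_continuous_xpartials[OF this]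
    show ?thesis
      by (simp add: P_def)
  qed
  define D where "D = [\<lambda>t. P [] (x + t *\<^sub>R c),
    \<lambda>t. \<Sum>l\<in>UNIV. c$l * P [l] (x + t *\<^sub>R c),
    \<lambda>t. \<Sum>l\<in>UNIV. c$l * (\<Sum>m\<in>UNIV. c$m * P [m, l] (x + t *\<^sub>R c)),
    \<lambda>t. \<Sum>l\<in>UNIV. c$l * (\<Sum>m\<in>UNIV. c$m * (\<Sum>k\<in>UNIV. c$k * P [k, m, l] (x + t *\<^sub>R c)))]"
  have "((D ! m) has_real_derivative (D ! Suc m) t) (at t)" if "m < 3" for m t
    using that unfolding D_def
    by (auto simp: less_Suc_eq numeral_3_eq_3 intro!: line DERIV_sum DERIV_cmult)
  moreover have "continuous_on {-1..1} (\<lambda>t. P vs (x + t *\<^sub>R c))" for vs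
    using smooth_fun_xpartials(1)[OF assms, of vs] unfolding P_def[symmetric]
    by (rule continuous_on_compose2) (auto intro!: continuous_intros)
  then have "continuous_on {-1..1} (D ! 3)"
    unfolding D_def by (auto intro!: continuous_intros)
  ultimately obtain M where M: "\<forall>h. \<bar>h\<bar> \<le> 1 \<longrightarrow> \<bar>(D ! 0) h - (\<Sum>m<3. (D ! m) 0 / fact m * h^m)\<bar> \<le> M * \<bar>h\<bar>^3"
    using taylor_remainder_bound[of 3 "\<lambda>m. D ! m"] by blast
  have "(D ! 1) 0 = (\<Sum>n\<in>mindices 1. mpow c n * mpartial n G x)"
    unfolding sum_mindices_1 by (simp add: D_def P_def)
  moreover have "(D ! 2) 0 / 2 = (\<Sum>n\<in>mindices 2. mpow c n / mfact n * mpartial n G x)"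
    unfolding sum_mindices_2[OF smooth_fun_xpartial_commute[OF assms]]
    by (simp add: D_def P_def sum_distrib_left mult.assoc smooth_fun_xpartial_commute[OF assms])
  ultimately show ?thesis
    using M by (simp add: D_def P_def numeral_3_eq_3 fact_numeral power2_eq_square diff_diff_eq) blast
qed

section \<open>Consistency of the initialisation scheme\<close>

lemma symmetric_stencil_expansion:
  fixes g :: "real \<Rightarrow> real" and \<alpha> \<beta> :: real
  defines "r \<equiv> \<lambda>h. g h - g 0 - \<alpha> * h - \<beta> * h^2"
  shows "g (-dx) * (dx * A + B) / 2 + g dx * (B - dx * A) / 2
    = g 0 * B + dx^2 * (B * \<beta> - A * \<alpha>) + ((dx * A + B) / 2 * r (-dx) + (B - dx * A) / 2 * r dx)"
  unfolding r_def by (simp add: field_simps power2_eq_square)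

lemma symmetric_stencil_remainder_bigo:
  fixes r :: "real \<Rightarrow> real"
  assumes r: "\<forall>h. \<bar>h\<bar> \<le> 1 \<longrightarrow> \<bar>r h\<bar> \<le> M * \<bar>h\<bar>^3"
  shows "(\<lambda>dx. ((dx * A + B) / 2 * r (-dx) + (B - dx * A) / 2 * r dx) / (dx^2 / \<mu>)) \<in> O[at_right 0](\<lambda>dx. dx)"
proof (rule bigoI)
  show "eventually (\<lambda>dx. norm (((dx * A + B) / 2 * r (-dx) + (B - dx * A) / 2 * r dx) / (dx^2 / \<mu>))
      \<le> \<bar>\<mu>\<bar> * (\<bar>A\<bar> + \<bar>B\<bar>) * M * norm dx) (at_right 0)"
    unfolding eventually_at_right_field
  proof (intro exI[of _ 1] conjI allI impI)
    fix dx :: real assume dx: "0 < dx" "dx < 1"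
    have r_dx: "\<bar>r (-dx)\<bar> \<le> M * dx^3" "\<bar>r dx\<bar> \<le> M * dx^3"
      using r[rule_format, of "-dx"] r[rule_format, of dx] dx by simp_all
    have "\<bar>dx * A\<bar> \<le> \<bar>A\<bar>"
      using dx by (simp add: abs_mult mult_left_le_one_le)
    then have weights: "\<bar>dx * A + B\<bar> / 2 \<le> (\<bar>A\<bar> + \<bar>B\<bar>) / 2" "\<bar>B - dx * A\<bar> / 2 \<le> (\<bar>A\<bar> + \<bar>B\<bar>) / 2"
      by (simp_all add: abs_le_iff) linarith+
    have "\<bar>(dx * A + B) / 2 * r (-dx) + (B - dx * A) / 2 * r dx\<bar>
        \<le> \<bar>dx * A + B\<bar> / 2 * \<bar>r (-dx)\<bar> + \<bar>B - dx * A\<bar> / 2 * \<bar>r dx\<bar>"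
      by (rule order_trans[OF abs_triangle_ineq]) (simp add: abs_mult)
    also have "\<dots> \<le> (\<bar>A\<bar> + \<bar>B\<bar>) / 2 * (M * dx^3) + (\<bar>A\<bar> + \<bar>B\<bar>) / 2 * (M * dx^3)"
      using weights r_dx by (intro add_mono mult_mono) auto
    finally have X: "\<bar>(dx * A + B) / 2 * r (-dx) + (B - dx * A) / 2 * r dx\<bar> \<le> (\<bar>A\<bar> + \<bar>B\<bar>) * M * dx^3"
      by (simp add: mult_ac)
    have "norm (((dx * A + B) / 2 * r (-dx) + (B - dx * A) / 2 * r dx) / (dx^2 / \<mu>))
        = \<bar>\<mu>\<bar> * \<bar>(dx * A + B) / 2 * r (-dx) + (B - dx * A) / 2 * r dx\<bar> / dx^2"
      by (simp add: abs_divide abs_mult)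
    also have "\<dots> \<le> \<bar>\<mu>\<bar> * ((\<bar>A\<bar> + \<bar>B\<bar>) * M * dx^3) / dx^2"
      using X by (intro divide_right_mono mult_left_mono) auto
    also have "\<dots> = \<bar>\<mu>\<bar> * (\<bar>A\<bar> + \<bar>B\<bar>) * M * norm dx"
      using dx by (simp add: power2_eq_square power3_eq_cube)
    finally show "norm (((dx * A + B) / 2 * r (-dx) + (B - dx * A) / 2 * r dx) / (dx^2 / \<mu>))
      \<le> \<bar>\<mu>\<bar> * (\<bar>A\<bar> + \<bar>B\<bar>) * M * norm dx" .
  qed simp
qed

lemma diffusive_difference_quotient_bigo:
  fixes u :: "real \<Rightarrow> real"
  assumes "0 < \<mu>" and u: "\<forall>t. \<bar>t\<bar> \<le> 1 \<longrightarrow> \<bar>u t - u0 - b * t\<bar> \<le> M * \<bar>t\<bar>^2"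
  shows "(\<lambda>dx. (u (dx^2 / \<mu>) - u0) / (dx^2 / \<mu>) - b) \<in> O[at_right 0](\<lambda>dx. dx)"
proof (rule bigoI)
  show "eventually (\<lambda>dx. norm ((u (dx^2 / \<mu>) - u0) / (dx^2 / \<mu>) - b) \<le> M / \<mu> * norm dx) (at_right 0)"
    unfolding eventually_at_right_field
  proof (intro exI[of _ "min 1 \<mu>"] conjI allI impI)
    fix dx :: real assume "0 < dx" "dx < min 1 \<mu>"
    then have dx: "0 < dx" "dx < 1" "dx < \<mu>" by auto
    define t where "t = dx^2 / \<mu>"
    have "0 < t" "t \<le> dx / \<mu>"
      using dx \<open>0 < \<mu>\<close> by (auto simp: t_def power2_eq_square divide_right_mono mult_left_le_one_le)
    have "dx / \<mu> \<le> 1"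
      using dx by simp
    have "M \<ge> 0"
      using u[rule_format, of 1] by simp
    have "\<bar>(u t - u0) / t - b\<bar> = \<bar>u t - u0 - b * t\<bar> / t"
      using \<open>0 < t\<close> by (simp add: field_simps)
    also have "\<dots> \<le> M * t"
    proof -
      have "\<bar>u t - u0 - b * t\<bar> \<le> M * t^2"
        using u[rule_format, of t] \<open>0 < t\<close> \<open>t \<le> dx / \<mu>\<close> \<open>dx / \<mu> \<le> 1\<close> by simp
      then show ?thesis
        using \<open>0 < t\<close> by (simp add: divide_le_eq power2_eq_square mult.assoc)
    qed
    also have "\<dots> \<le> M / \<mu> * dx"
      using mult_left_mono[OF \<open>t \<le> dx / \<mu>\<close> \<open>M \<ge> 0\<close>] by simp
    finally show "norm ((u (dx^2 / \<mu>) - u0) / (dx^2 / \<mu>) - b) \<le> M / \<mu> * norm dx"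
      using dx by (simp add: t_def)
  qed (use \<open>0 < \<mu>\<close> in simp)
qed

lemma diffusive_initialisation_error_bigo:
  fixes u :: "real \<Rightarrow> real" and F :: "real^'d \<Rightarrow> real" and \<alpha> \<beta> Ms :: "nat \<Rightarrow> real"
  assumes "0 < \<mu>" and "c 1 = 0" and "\<forall>j\<in>{1..W}. c (2*j+1) = - c (2*j)"
    and "\<forall>j\<in>{1..W}. sr (2*j) = s \<and> sr (2*j+1) = 2 - s" and "e 1 = 1" and "w 1 = 1"
    and time: "\<forall>t. \<bar>t\<bar> \<le> 1 \<longrightarrow> \<bar>u t - F x - b * t\<bar> \<le> Mt * \<bar>t\<bar>^2"
    and space: "\<forall>j h. \<bar>h\<bar> \<le> 1 \<longrightarrow> \<bar>F (x + h *\<^sub>R c (2*j)) - F x - \<alpha> j * h - \<beta> j * h^2\<bar> \<le> Ms j * \<bar>h\<bar>^3"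
  shows "(\<lambda>dx. (u (dx^2 / \<mu>)
              - Ew_op W dx c sr (\<lambda>k. if even k then dx * e k else e k)
                               (\<lambda>k. if even k then dx * w k else w k) 1 F x) / (dx^2 / \<mu>)
          - (b + \<mu> * (\<Sum>j=1..W. (s * e (2*j) + (1 - s) * w (2*j)) * \<alpha> j)
               - \<mu> * (\<Sum>j=1..W. ((2 - s) * e (2*j+1) + (s - 1) * w (2*j+1)) * \<beta> j)))
         \<in> O[at_right 0](\<lambda>dx. dx)" (is "?err \<in> _")
proof -
  define A where "A j = s * e (2*j) + (1 - s) * w (2*j)" for j
  define B where "B j = (2 - s) * e (2*j+1) + (s - 1) * w (2*j+1)" for j
  define r where "r j h = F (x + h *\<^sub>R c (2*j)) - F x - \<alpha> j * h - \<beta> j * h^2" for j h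
  define \<rho> where "\<rho> j dx = (dx * A j + B j) / 2 * r j (-dx) + (B j - dx * A j) / 2 * r j dx" for j dx
  have stencils: "(\<Sum>j=1..W. F (x - dx *\<^sub>R c (2*j)) * (dx * A j + B j) / 2 + F (x + dx *\<^sub>R c (2*j)) * (B j - dx * A j) / 2)
      = F x * (\<Sum>j=1..W. B j) + dx^2 * ((\<Sum>j=1..W. B j * \<beta> j) - (\<Sum>j=1..W. A j * \<alpha> j)) + (\<Sum>j=1..W. \<rho> j dx)"
    for dx
  proof -
    have "F (x - dx *\<^sub>R c (2*j)) * (dx * A j + B j) / 2 + F (x + dx *\<^sub>R c (2*j)) * (B j - dx * A j) / 2
        = F x * B j + dx^2 * (B j * \<beta> j - A j * \<alpha> j) + \<rho> j dx" for j
      using symmetric_stencil_expansion[where g="\<lambda>h. F (x + h *\<^sub>R c (2*j))" and \<alpha>="\<alpha> j" and \<beta>="\<beta> j"]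
      by (simp add: \<rho>_def r_def)
    then show ?thesis
      by (simp add: sum.distrib sum_distrib_left sum_subtractf right_diff_distrib)
  qed
  have decomposition: "eventually (\<lambda>dx. ?err dx
      = ((u (dx^2 / \<mu>) - F x) / (dx^2 / \<mu>) - b) - (\<Sum>j=1..W. \<rho> j dx / (dx^2 / \<mu>))) (at_right 0)"
    unfolding eventually_at_right_field
  proof (intro exI[of _ 1] conjI allI impI)
    fix dx :: real assume "0 < dx"
    show "?err dx = ((u (dx^2 / \<mu>) - F x) / (dx^2 / \<mu>) - b) - (\<Sum>j=1..W. \<rho> j dx / (dx^2 / \<mu>))"
      unfolding Ew_op_first_row_diffusive[where c=c and W=W and sr=sr and s=s and e=e and w=w, OF assms(2-6)]
        A_def[symmetric] B_def[symmetric] stencils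
      using \<open>0 < dx\<close> \<open>0 < \<mu>\<close> by (simp add: field_simps sum_divide_distrib[symmetric] sum_distrib_left power2_eq_square)
  qed simp
  have time_part: "(\<lambda>dx. (u (dx^2 / \<mu>) - F x) / (dx^2 / \<mu>) - b) \<in> O[at_right 0](\<lambda>dx. dx)"
    by (rule diffusive_difference_quotient_bigo[OF \<open>0 < \<mu>\<close> time])
  have space_part: "(\<lambda>dx. \<Sum>j=1..W. \<rho> j dx / (dx^2 / \<mu>)) \<in> O[at_right 0](\<lambda>dx. dx)"
  proof (rule big_sum_in_bigo)
    fix j
    show "(\<lambda>dx. \<rho> j dx / (dx^2 / \<mu>)) \<in> O[at_right 0](\<lambda>dx. dx)"
      unfolding \<rho>_def using space by (intro symmetric_stencil_remainder_bigo[where M="Ms j"]) (simp add: r_def)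
  qed
  show ?thesis
    unfolding landau_o.big.in_cong[OF decomposition] by (rule sum_in_bigo(2)[OF time_part space_part])
qed

theorem proposition13:
  fixes W :: nat and s \<mu> :: real
    and c :: "nat \<Rightarrow> real^'d"
    and sr :: "nat \<Rightarrow> real"
    and e w :: "nat \<Rightarrow> real"
    and \<phi> :: "real \<times> (real^'d) \<Rightarrow> real"
    and x :: "real^'d"
  assumes "1 \<le> W" and "0 < s" and "s \<le> 2" and "0 < \<mu>"
    and "c 1 = 0"
    and "\<forall>j\<in>{1..W}. c (2*j+1) = - c (2*j)"
    and "\<forall>k\<in>{1..2*W+1}. \<forall>l. c k $ l \<in> \<int>"
    and "\<forall>j\<in>{1..W}. sr (2*j) = s \<and> sr (2*j+1) = 2 - s"
    and "e 1 = 1" and "w 1 = 1"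
    and "smooth_fun \<phi>"
  shows "(\<lambda>dx. (\<phi> (dx^2 / \<mu>, x)
              - Ew_op W dx c sr (\<lambda>k. if even k then dx * e k else e k)
                               (\<lambda>k. if even k then dx * w k else w k) 1 (\<lambda>y. \<phi> (0, y)) x)
             / (dx^2 / \<mu>)
          - (dirderiv (1, 0) \<phi> (0, x)
             + \<mu> * (\<Sum>j=1..W. (s * e (2*j) + (1 - s) * w (2*j)) *
                   (\<Sum>n\<in>mindices 1. mpow (c (2*j)) n * mpartial n (\<lambda>y. \<phi> (0, y)) x))
             - \<mu> * (\<Sum>j=1..W. ((2 - s) * e (2*j+1) + (s - 1) * w (2*j+1)) *
                   (\<Sum>n\<in>mindices 2. mpow (c (2*j)) n / mfact n * mpartial n (\<lambda>y. \<phi> (0, y)) x))))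
         \<in> O[at_right 0](\<lambda>dx. dx)"
proof -
  define F where "F = (\<lambda>y. \<phi> (0, y))"
  have "smooth_fun F"
    unfolding F_def using assms(11) by (rule smooth_fun_slice)
  obtain Mt where time: "\<forall>t. \<bar>t\<bar> \<le> 1 \<longrightarrow> \<bar>\<phi> (t, x) - F x - dirderiv (1, 0) \<phi> (0, x) * t\<bar> \<le> Mt * \<bar>t\<bar>^2"
    using smooth_fun_time_taylor[OF assms(11)] unfolding F_def by blast
  have "\<forall>j. \<exists>M. \<forall>h. \<bar>h\<bar> \<le> 1 \<longrightarrow> \<bar>F (x + h *\<^sub>R c (2*j)) - F x
      - (\<Sum>n\<in>mindices 1. mpow (c (2*j)) n * mpartial n F x) * h
      - (\<Sum>n\<in>mindices 2. mpow (c (2*j)) n / mfact n * mpartial n F x) * h^2\<bar> \<le> M * \<bar>h\<bar>^3"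
    using smooth_fun_line_taylor[OF \<open>smooth_fun F\<close>] by blast
  from choice[OF this] obtain Ms where space: "\<forall>j. \<forall>h. \<bar>h\<bar> \<le> 1 \<longrightarrow> \<bar>F (x + h *\<^sub>R c (2*j)) - F x
      - (\<Sum>n\<in>mindices 1. mpow (c (2*j)) n * mpartial n F x) * h
      - (\<Sum>n\<in>mindices 2. mpow (c (2*j)) n / mfact n * mpartial n F x) * h^2\<bar> \<le> Ms j * \<bar>h\<bar>^3"
    by blast
  show ?thesis
    using diffusive_initialisation_error_bigo[where u="\<lambda>t. \<phi> (t, x)" and F=F and x=x and c=c and e=e and w=w,
        OF assms(4,5,6,8,9,10) time space]
    unfolding F_def .
qed

end
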